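(* Let $S=(n,\phi,F)$ be a semicoherent system whose component lifetimes $X_1,\ldots,X_n$ are exchangeable and have no ties. Then for every $j\in[n]$, $$I_{\mathrm{BP}}^{(j)}=b_j:=\sum_{A\subseteq[n]\setminus\{j\}}\frac{1}{n\binom{n-1}{|A|}}\big(\phi(A\cup\{j\})-\phi(A)\big).$$
   Context: Semicoherent system: $\phi:2^{[n]}\to\{0,1\}$ nondecreasing (subsets identified with Boolean vectors), $\phi(\varnothing)=0$, $\phi([n])=1$; $F$ is the joint c.d.f. of nonnegative lifetimes; no ties means $\Pr(X_i=X_k)=0$ for $i\neq k$. System lifetime $T=\inf\{t\geq0:\phi(\{i:X_i>t\})=0\}$; $I_{\mathrm{BP}}^{(j)}=\Pr(T=X_j)$. *)

theory Defs
  imports "HOL-Probability.Probability"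
begin

text \<open>Semicoherent structure function on components {1..n}: subsets are
  identified with Boolean vectors; phi is nondecreasing, phi {} = 0, phi [n] = 1.\<close>
definition semicoherent :: "nat \<Rightarrow> (nat set \<Rightarrow> bool) \<Rightarrow> bool" where
  "semicoherent n \<phi> \<longleftrightarrow>
     (\<forall>A B. A \<subseteq> B \<longrightarrow> B \<subseteq> {1..n} \<longrightarrow> \<phi> A \<longrightarrow> \<phi> B) \<and>
     \<not> \<phi> {} \<and> \<phi> {1..n}"

definition sys_lifetime ::
    "nat \<Rightarrow> (nat set \<Rightarrow> bool) \<Rightarrow> (nat \<Rightarrow> 'a \<Rightarrow> real) \<Rightarrow> 'a \<Rightarrow> real" where
  "sys_lifetime n \<phi> X \<omega> = Inf {t. 0 \<le> t \<and> \<not> \<phi> {i \<in> {1..n}. X i \<omega> > t}}"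

definition exchangeable :: "'a measure \<Rightarrow> nat \<Rightarrow> (nat \<Rightarrow> 'a \<Rightarrow> real) \<Rightarrow> bool" where
  "exchangeable M n X \<longleftrightarrow>
     (\<forall>\<sigma>. \<sigma> permutes {1..n} \<longrightarrow>
        distr M (PiM {1..n} (\<lambda>_. borel)) (\<lambda>\<omega>. \<lambda>i\<in>{1..n}. X (\<sigma> i) \<omega>) =
        distr M (PiM {1..n} (\<lambda>_. borel)) (\<lambda>\<omega>. \<lambda>i\<in>{1..n}. X i \<omega>))"

definition no_ties :: "'a measure \<Rightarrow> nat \<Rightarrow> (nat \<Rightarrow> 'a \<Rightarrow> real) \<Rightarrow> bool" where
  "no_ties M n X \<longleftrightarrow>
     (\<forall>i\<in>{1..n}. \<forall>k\<in>{1..n}. i \<noteq> k \<longrightarrow>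
        measure M {\<omega> \<in> space M. X i \<omega> = X k \<omega>} = 0)"

definition I_BP :: "'a measure \<Rightarrow> nat \<Rightarrow> (nat set \<Rightarrow> bool) \<Rightarrow> (nat \<Rightarrow> 'a \<Rightarrow> real) \<Rightarrow> nat \<Rightarrow> real" where
  "I_BP M n \<phi> X j = measure M {\<omega> \<in> space M. sys_lifetime n \<phi> X \<omega> = X j \<omega>}"

end

theory Submission
  imports Defs
begin

(* Write alive(t) for the set of components still working at time t.
   (1) Deterministically, for lifetimes that are nonnegative and pairwise
       distinct, the system fails exactly at X_j iff j is critical for the set
       A = alive(X_j) of components outliving j: phi (A + j) holds and phi A
       fails.  This rests on a characterisation of the infimum defining the
       system lifetime through the finitely many candidate times 0, X_1, ..., X_n.
   (2) Hence Pr(T = X_j) is the sum over A of [j critical for A] * Pr(R_j(A)),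
       where R_j(A) is the rank event "exactly A outlives j".  This only uses
       that there are almost surely no ties.
   (3) Exchangeability: a permutation moving (j, A) to (j', A') with |A| = |A'|
       leaves the law invariant, so Pr(R_j(A)) depends on |A| = k only.  For
       fixed k < n almost every outcome lies in exactly one of the n * C(n-1,k)
       events R_j'(A') with |A'| = k (the component of rank k), so each has
       probability 1 / (n * C(n-1,k)). *)

lemma semicoherent_mono:
  assumes "semicoherent n \<phi>" and "A \<subseteq> B" and "B \<subseteq> {1..n}" and "\<phi> A"
  shows "\<phi> B"
  using assms unfolding semicoherent_def by blast

definition alive :: "nat \<Rightarrow> (nat \<Rightarrow> real) \<Rightarrow> real \<Rightarrow> nat set" where
  "alive n x t = {i \<in> {1..n}. t < x i}"

lemma alive_subset: "alive n x t \<subseteq> {1..n}"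
  unfolding alive_def by blast

lemma alive_own_failure: "alive n x (x j) \<subseteq> {1..n} - {j}"
  unfolding alive_def by auto

lemma sys_lifetime_alive:
  "sys_lifetime n \<phi> X \<omega> = Inf {t. 0 \<le> t \<and> \<not> \<phi> (alive n (\<lambda>i. X i \<omega>) t)}"
  unfolding sys_lifetime_def alive_def ..

(* The alive set is constant between consecutive candidate times 0, x_1, ..., x_n:
   every time t >= 0 can be replaced by the latest candidate not after t. *)
lemma alive_latest_candidate:
  fixes x :: "nat \<Rightarrow> real"
  assumes "0 \<le> t"
  obtains c where "c \<in> insert 0 (x ` {1..n})" "0 \<le> c" "c \<le> t" "alive n x c = alive n x t"
proof
  define D where "D = {c \<in> insert 0 (x ` {1..n}). c \<le> t}"
  have "finite D" "0 \<in> D" using assms unfolding D_def by auto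
  then have max: "Max D \<in> D" "\<And>c. c \<in> D \<Longrightarrow> c \<le> Max D"
    by (auto intro: Max_in Max_ge simp del: Max_less_iff)
  show "Max D \<in> insert 0 (x ` {1..n})" "Max D \<le> t"
    using max(1) unfolding D_def by simp_all
  show "0 \<le> Max D" using \<open>0 \<in> D\<close> by (rule max(2))
  have "Max D < x i \<longleftrightarrow> t < x i" if "i \<in> {1..n}" for i
  proof
    assume less: "Max D < x i"
    show "t < x i"
    proof (rule ccontr)
      assume "\<not> t < x i"
      then have "x i \<in> D" using that unfolding D_def by auto
      then show False using max(2) less by fastforce
    qed
  next
    assume "t < x i"
    then show "Max D < x i" using max(1) unfolding D_def by auto
  qed
  then show "alive n x (Max D) = alive n x t"
    unfolding alive_def by auto
qed

lemma lifetime_eqI: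
  fixes x :: "nat \<Rightarrow> real"
  assumes "0 \<le> y" and "\<not> \<phi> (alive n x y)"
    and up: "\<forall>c\<in>insert 0 (x ` {1..n}). 0 \<le> c \<and> c < y \<longrightarrow> \<phi> (alive n x c)"
  shows "Inf {t. 0 \<le> t \<and> \<not> \<phi> (alive n x t)} = y"
proof (rule cInf_eq_minimum)
  show "y \<in> {t. 0 \<le> t \<and> \<not> \<phi> (alive n x t)}" using assms(1,2) by simp
  fix t assume t: "t \<in> {t. 0 \<le> t \<and> \<not> \<phi> (alive n x t)}"
  then have "0 \<le> t" by simp
  then obtain c where "c \<in> insert 0 (x ` {1..n})" "0 \<le> c" "c \<le> t" "alive n x c = alive n x t"
    by (rule alive_latest_candidate)
  with up t show "y \<le> t" by force
qed

(* It holds for arbitrary x and yields both measurability and step (1).  The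
   earliest candidate at which the system is down satisfies the criterion. *)
lemma lifetime_eq_iff:
  fixes x :: "nat \<Rightarrow> real"
  assumes sc: "semicoherent n \<phi>"
  shows "Inf {t. 0 \<le> t \<and> \<not> \<phi> (alive n x t)} = y \<longleftrightarrow>
    0 \<le> y \<and> \<not> \<phi> (alive n x y) \<and>
    (\<forall>c\<in>insert 0 (x ` {1..n}). 0 \<le> c \<and> c < y \<longrightarrow> \<phi> (alive n x c))"
    (is "Inf ?S = y \<longleftrightarrow> ?R y")
proof -
  let ?C = "insert 0 (x ` {1..n})"
  define D where "D = {c \<in> ?C. c \<in> ?S}"
  have "Max ?C \<in> D"
  proof -
    have "alive n x (Max ?C) = {}" unfolding alive_def by (auto simp: not_less)
    moreover have "0 \<le> Max ?C" by (simp add: Max_ge_iff)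
    moreover have "Max ?C \<in> ?C" by (rule Max_in) auto
    ultimately show ?thesis using sc unfolding semicoherent_def D_def by simp
  qed
  moreover have "finite D" unfolding D_def by simp
  ultimately have min: "Min D \<in> D" "\<And>c. c \<in> D \<Longrightarrow> Min D \<le> c"
    by (auto intro: Min_in Min_le simp del: Min_le_iff)
  have R_min: "?R (Min D)"
  proof (intro conjI ballI impI)
    show "0 \<le> Min D" "\<not> \<phi> (alive n x (Min D))" using min(1) unfolding D_def by auto
    fix c assume c: "c \<in> ?C" "0 \<le> c \<and> c < Min D"
    show "\<phi> (alive n x c)"
    proof (rule ccontr)
      assume "\<not> \<phi> (alive n x c)"
      then have "c \<in> D" using c unfolding D_def by simp
      then show False using min(2) c by fastforce
    qed
  qed
  then have inf: "Inf ?S = Min D" by (intro lifetime_eqI) blast+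
  show ?thesis
  proof
    assume "Inf ?S = y"
    then show "?R y" using inf R_min by simp
  next
    assume "?R y"
    then show "Inf ?S = y" by (intro lifetime_eqI) blast+
  qed
qed

lemma alive_just_before:
  fixes x :: "nat \<Rightarrow> real"
  assumes inj: "inj_on x {1..n}" and j: "j \<in> {1..n}" and pos: "0 < x j"
  obtains c where "c \<in> insert 0 (x ` {1..n})" "0 \<le> c" "c < x j"
    "alive n x c = insert j (alive n x (x j))"
proof
  define D where "D = {c \<in> insert 0 (x ` {1..n}). c < x j}"
  have "finite D" "0 \<in> D" using pos unfolding D_def by auto
  then have max: "Max D \<in> D" "\<And>c. c \<in> D \<Longrightarrow> c \<le> Max D"
    by (auto intro: Max_in Max_ge simp del: Max_less_iff)
  show "Max D \<in> insert 0 (x ` {1..n})" "Max D < x j"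
    using max(1) unfolding D_def by simp_all
  show "0 \<le> Max D" using \<open>0 \<in> D\<close> by (rule max(2))
  have "Max D < x i \<longleftrightarrow> i = j \<or> x j < x i" if i: "i \<in> {1..n}" for i
  proof
    assume less: "Max D < x i"
    show "i = j \<or> x j < x i"
    proof (rule ccontr)
      assume not_later: "\<not> (i = j \<or> x j < x i)"
      then have "x i \<noteq> x j" using inj_onD[OF inj _ i j] by blast
      with not_later have "x i < x j" by simp
      then have "x i \<in> D" using i unfolding D_def by auto
      then show False using max(2) less by fastforce
    qed
  next
    assume "i = j \<or> x j < x i"
    then show "Max D < x i" using max(1) unfolding D_def by auto
  qed
  then show "alive n x (Max D) = insert j (alive n x (x j))"
    using j unfolding alive_def by auto
qed

lemma up_before_imp_up_with_component:
  fixes x :: "nat \<Rightarrow> real"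
  assumes sc: "semicoherent n \<phi>"
    and nonneg: "\<And>i. i \<in> {1..n} \<Longrightarrow> 0 \<le> x i" and inj: "inj_on x {1..n}"
    and j: "j \<in> {1..n}"
    and up: "\<forall>c\<in>insert 0 (x ` {1..n}). 0 \<le> c \<and> c < x j \<longrightarrow> \<phi> (alive n x c)"
  shows "\<phi> (insert j (alive n x (x j)))"
proof (cases "x j = 0")
  case True
  have "i \<in> insert j (alive n x (x j))" if i: "i \<in> {1..n}" for i
  proof (cases "i = j")
    case False
    then have "x i \<noteq> x j" using inj_onD[OF inj _ i j] by blast
    then show ?thesis using True nonneg[OF i] i unfolding alive_def by auto
  qed simp
  then have "insert j (alive n x (x j)) = {1..n}" using j alive_subset by blast
  then show ?thesis using sc unfolding semicoherent_def by simp
next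
  case False
  then have "0 < x j" using nonneg j by (simp add: less_le)
  then obtain c where c: "c \<in> insert 0 (x ` {1..n})" "0 \<le> c" "c < x j"
    and "alive n x c = insert j (alive n x (x j))"
    using alive_just_before[OF inj j] by blast
  moreover have "\<phi> (alive n x c)" using up c by blast
  ultimately show ?thesis by simp
qed

(* Conversely to the previous
   lemma, monotonicity shows the system is up before x_j if j is critical. *)
lemma lifetime_eq_component_iff:
  fixes x :: "nat \<Rightarrow> real"
  assumes sc: "semicoherent n \<phi>"
    and nonneg: "\<And>i. i \<in> {1..n} \<Longrightarrow> 0 \<le> x i" and inj: "inj_on x {1..n}"
    and j: "j \<in> {1..n}"
  shows "Inf {t. 0 \<le> t \<and> \<not> \<phi> (alive n x t)} = x j \<longleftrightarrow>
    \<phi> (insert j (alive n x (x j))) \<and> \<not> \<phi> (alive n x (x j))"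
proof -
  let ?A = "alive n x (x j)"
  have up_before: "\<forall>c\<in>insert 0 (x ` {1..n}). 0 \<le> c \<and> c < x j \<longrightarrow> \<phi> (alive n x c)"
    if critical: "\<phi> (insert j ?A)"
  proof (intro ballI impI)
    fix c assume "c \<in> insert 0 (x ` {1..n})" "0 \<le> c \<and> c < x j"
    then have "insert j ?A \<subseteq> alive n x c"
      using j unfolding alive_def by auto
    then show "\<phi> (alive n x c)"
      using semicoherent_mono[OF sc _ alive_subset critical] by blast
  qed
  show ?thesis
    unfolding lifetime_eq_iff[OF sc]
  proof (intro iffI conjI)
    assume "0 \<le> x j \<and> \<not> \<phi> ?A \<and>
      (\<forall>c\<in>insert 0 (x ` {1..n}). 0 \<le> c \<and> c < x j \<longrightarrow> \<phi> (alive n x c))"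
    then show "\<phi> (insert j ?A)" "\<not> \<phi> ?A"
      using up_before_imp_up_with_component[OF sc nonneg inj j] by blast+
  next
    assume critical: "\<phi> (insert j ?A) \<and> \<not> \<phi> ?A"
    then show "\<not> \<phi> ?A" "\<forall>c\<in>insert 0 (x ` {1..n}). 0 \<le> c \<and> c < x j \<longrightarrow> \<phi> (alive n x c)"
      using up_before by blast+
  qed (rule nonneg[OF j])
qed

lemma critical_indicator:
  assumes "semicoherent n \<phi>" and "j \<in> {1..n}" and "A \<subseteq> {1..n}"
  shows "of_bool (\<phi> (insert j A) \<and> \<not> \<phi> A) = (of_bool (\<phi> (A \<union> {j})) - of_bool (\<phi> A) :: real)"
proof -
  have "insert j A \<subseteq> {1..n}" using assms(2,3) by blast
  then have "\<phi> A \<Longrightarrow> \<phi> (insert j A)" by (rule semicoherent_mono[OF assms(1) subset_insertI])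
  then show ?thesis by auto
qed

lemma rank_bij:
  fixes x :: "nat \<Rightarrow> real"
  assumes inj: "inj_on x {1..n}"
  shows "bij_betw (\<lambda>j. card (alive n x (x j))) {1..n} {..<n}"
proof -
  let ?r = "\<lambda>j. card (alive n x (x j))"
  have later_fewer: "?r j' < ?r j" if "j' \<in> {1..n}" "x j < x j'" for j j'
  proof (rule psubset_card_mono)
    show "finite (alive n x (x j))" unfolding alive_def by simp
    show "alive n x (x j') \<subset> alive n x (x j)"
      using that unfolding alive_def by auto
  qed
  have "inj_on ?r {1..n}"
  proof (rule inj_onI)
    fix j j' assume j: "j \<in> {1..n}" "j' \<in> {1..n}" and same: "?r j = ?r j'"
    show "j = j'"
    proof (rule ccontr)
      assume "j \<noteq> j'"
      then have "x j \<noteq> x j'" using inj_onD[OF inj _ j] by blast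
      then show False using later_fewer[of j' j] later_fewer[of j j'] j same
        by (cases "x j < x j'") auto
    qed
  qed
  moreover have "?r ` {1..n} \<subseteq> {..<n}"
  proof safe
    fix j assume j: "j \<in> {1..n}"
    have "?r j \<le> card ({1..n} - {j})" by (intro card_mono alive_own_failure) auto
    also have "\<dots> < n" using j by simp
    finally show "?r j < n" .
  qed
  moreover from calculation have "card (?r ` {1..n}) = card {..<n}"
    by (simp add: card_image)
  ultimately show ?thesis
    unfolding bij_betw_def by (simp add: card_subset_eq)
qed

lemma component_of_rank:
  fixes x :: "nat \<Rightarrow> real"
  assumes "inj_on x {1..n}" "k < n"
  obtains j where "j \<in> {1..n}" "card (alive n x (x j)) = k"
    "\<forall>j'\<in>{1..n}. card (alive n x (x j')) = k \<longrightarrow> j' = j"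
proof -
  have bij: "bij_betw (\<lambda>j. card (alive n x (x j))) {1..n} {..<n}"
    using assms(1) by (rule rank_bij)
  then have "k \<in> (\<lambda>j. card (alive n x (x j))) ` {1..n}"
    using assms(2) unfolding bij_betw_def by simp
  then obtain j where j: "j \<in> {1..n}" "card (alive n x (x j)) = k" by blast
  moreover have "j' = j" if "j' \<in> {1..n}" "card (alive n x (x j')) = k" for j'
    using inj_onD[OF bij_betw_imp_inj_on[OF bij] _ that(1) j(1)] that(2) j(2) by simp
  ultimately show ?thesis using that by blast
qed

lemma permutation_moving:
  assumes fin: "finite I" and j: "j \<in> I" "j' \<in> I"
    and A: "A \<subseteq> I - {j}" "A' \<subseteq> I - {j'}" and card: "card A = card A'"
  obtains \<sigma> where "\<sigma> permutes I" "\<sigma> j = j'" "\<sigma> ` A = A'"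
proof -
  define C where "C = I - insert j A"
  define C' where "C' = I - insert j' A'"
  have fin_A: "finite A" "finite A'" using A fin by (auto intro: finite_subset)
  obtain f where f: "bij_betw f A A'" using finite_same_card_bij[OF fin_A card] by blast
  have notin: "j \<notin> A" "j' \<notin> A'" using A by auto
  have "card C = card I - card (insert j A)" "card C' = card I - card (insert j' A')"
    unfolding C_def C'_def using A j fin_A by (auto intro: card_Diff_subset)
  moreover have "card (insert j A) = card (insert j' A')" using notin fin_A card by simp
  ultimately have "card C = card C'" by simp
  moreover have "finite C" "finite C'" unfolding C_def C'_def using fin by auto
  ultimately obtain g where g: "bij_betw g C C'" using finite_same_card_bij by metis
  define \<tau> where "\<tau> x = (if x \<in> {j} \<union> A then if x \<in> {j} then j' else f x else g x)" for x
  have "bij_betw (\<lambda>x. if x \<in> {j} then j' else f x) ({j} \<union> A) ({j'} \<union> A')"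
    by (rule bij_betw_disjoint_Un) (use f A in auto)
  then have "bij_betw \<tau> ({j} \<union> A \<union> C) ({j'} \<union> A' \<union> C')"
    unfolding \<tau>_def by (rule bij_betw_disjoint_Un[OF _ g]) (auto simp: C_def C'_def)
  moreover have "{j} \<union> A \<union> C = I" "{j'} \<union> A' \<union> C' = I"
    using A j unfolding C_def C'_def by auto
  ultimately have "bij_betw \<tau> I I" by (simp only:)
  define \<sigma> where "\<sigma> x = (if x \<in> I then \<tau> x else x)" for x
  have "bij_betw \<sigma> I I"
    using bij_betw_cong[of I \<sigma> \<tau> I] \<open>bij_betw \<tau> I I\<close> unfolding \<sigma>_def by simp
  then have "\<sigma> permutes I" by (rule bij_imp_permutes) (simp add: \<sigma>_def)
  moreover have "\<sigma> j = j'" using j by (simp add: \<sigma>_def \<tau>_def)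
  moreover have "\<sigma> ` A = f ` A"
    using A by (intro image_cong) (auto simp: \<sigma>_def \<tau>_def)
  then have "\<sigma> ` A = A'" using f by (simp add: bij_betw_def)
  ultimately show ?thesis using that by blast
qed

lemma alive_permute:
  assumes "\<sigma> permutes {1..n}"
  shows "alive n (\<lambda>i. x (\<sigma> i)) t = A \<longleftrightarrow> alive n x t = \<sigma> ` A"
proof -
  have "alive n (\<lambda>i. x (\<sigma> i)) t = \<sigma> -` alive n x t"
    using permutes_in_image[OF assms] unfolding alive_def by auto
  moreover have "\<sigma> -` S = A \<longleftrightarrow> S = \<sigma> ` A" for S :: "nat set"
  proof
    assume "\<sigma> -` S = A"
    then show "S = \<sigma> ` A" by (metis assms permutes_surj surj_image_vimage_eq)
  next
    assume "S = \<sigma> ` A"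
    then show "\<sigma> -` S = A" by (metis assms permutes_inj inj_vimage_image_eq)
  qed
  ultimately show ?thesis by simp
qed

lemma alive_restrict: "alive n (\<lambda>i\<in>{1..n}. x i) t = alive n x t"
  unfolding alive_def by auto

lemma pred_Collect_finite:
  assumes "finite I" "\<And>i. i \<in> I \<Longrightarrow> Measurable.pred M (P i)"
  shows "Measurable.pred M (\<lambda>\<omega>. Q {i \<in> I. P i \<omega>})"
proof -
  have "Q {i \<in> I. P i \<omega>} \<longleftrightarrow> (\<exists>B\<in>{B. B \<subseteq> I \<and> Q B}. \<forall>i\<in>I. P i \<omega> \<longleftrightarrow> i \<in> B)" for \<omega>
  proof
    assume "Q {i \<in> I. P i \<omega>}"
    then show "\<exists>B\<in>{B. B \<subseteq> I \<and> Q B}. \<forall>i\<in>I. P i \<omega> \<longleftrightarrow> i \<in> B"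
      by (intro bexI[of _ "{i \<in> I. P i \<omega>}"]) auto
  next
    assume "\<exists>B\<in>{B. B \<subseteq> I \<and> Q B}. \<forall>i\<in>I. P i \<omega> \<longleftrightarrow> i \<in> B"
    then obtain B where "B \<subseteq> I" "Q B" "\<forall>i\<in>I. P i \<omega> \<longleftrightarrow> i \<in> B" by blast
    moreover from this have "{i \<in> I. P i \<omega>} = B" by auto
    ultimately show "Q {i \<in> I. P i \<omega>}" by simp
  qed
  moreover have "Measurable.pred M (\<lambda>\<omega>. \<exists>B\<in>{B. B \<subseteq> I \<and> Q B}. \<forall>i\<in>I. P i \<omega> \<longleftrightarrow> i \<in> B)"
    using assms by (intro pred_intros_finite pred_intros_logic) auto
  ultimately show ?thesis by simp
qed

lemma pred_alive:
  assumes "\<And>i. i \<in> {1..n} \<Longrightarrow> Y i \<in> borel_measurable M" and "c \<in> borel_measurable M"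
  shows "Measurable.pred M (\<lambda>\<omega>. Q (alive n (\<lambda>i. Y i \<omega>) (c \<omega>)))"
  unfolding alive_def by (rule pred_Collect_finite) (use assms in measurable)

lemma pred_lifetime_eq:
  assumes sc: "semicoherent n \<phi>"
    and X: "\<And>i. i \<in> {1..n} \<Longrightarrow> X i \<in> borel_measurable M" and Y: "Y \<in> borel_measurable M"
  shows "Measurable.pred M (\<lambda>\<omega>. sys_lifetime n \<phi> X \<omega> = Y \<omega>)"
proof -
  have "sys_lifetime n \<phi> X \<omega> = Y \<omega> \<longleftrightarrow>
      0 \<le> Y \<omega> \<and> \<not> \<phi> (alive n (\<lambda>i. X i \<omega>) (Y \<omega>)) \<and>
      (0 < Y \<omega> \<longrightarrow> \<phi> (alive n (\<lambda>i. X i \<omega>) 0)) \<and>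
      (\<forall>k\<in>{1..n}. 0 \<le> X k \<omega> \<and> X k \<omega> < Y \<omega> \<longrightarrow> \<phi> (alive n (\<lambda>i. X i \<omega>) (X k \<omega>)))" for \<omega>
    unfolding sys_lifetime_alive lifetime_eq_iff[OF sc] by simp
  moreover have "Measurable.pred M (\<lambda>\<omega>.
      0 \<le> Y \<omega> \<and> \<not> \<phi> (alive n (\<lambda>i. X i \<omega>) (Y \<omega>)) \<and>
      (0 < Y \<omega> \<longrightarrow> \<phi> (alive n (\<lambda>i. X i \<omega>) 0)) \<and>
      (\<forall>k\<in>{1..n}. 0 \<le> X k \<omega> \<and> X k \<omega> < Y \<omega> \<longrightarrow> \<phi> (alive n (\<lambda>i. X i \<omega>) (X k \<omega>))))"
    using X Y by (intro pred_intros_logic pred_intros_finite pred_alive) auto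
  ultimately show ?thesis by simp
qed

definition rank_event :: "'a measure \<Rightarrow> nat \<Rightarrow> (nat \<Rightarrow> 'a \<Rightarrow> real) \<Rightarrow> nat \<Rightarrow> nat set \<Rightarrow> 'a set"
  where "rank_event M n X j A = {\<omega> \<in> space M. alive n (\<lambda>i. X i \<omega>) (X j \<omega>) = A}"

lemma sets_rank_event:
  assumes "\<And>i. i \<in> {1..n} \<Longrightarrow> X i \<in> borel_measurable M" and "j \<in> {1..n}"
  shows "rank_event M n X j A \<in> sets M"
  using pred_alive[of n X M "X j" "\<lambda>B. B = A"] assms
  unfolding rank_event_def pred_def by simp

lemma (in prob_space) prob_eq_indicator_combination:
  assumes E: "E \<in> events" and F: "\<And>p. p \<in> P \<Longrightarrow> F p \<in> events"
    and AE: "AE \<omega> in M. indicator E \<omega> = (\<Sum>p\<in>P. c p * indicator (F p) \<omega>)"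
  shows "prob E = (\<Sum>p\<in>P. c p * prob (F p))"
proof -
  have "prob E = expectation (indicator E)" using E by (simp add: Int_absorb2)
  also have "\<dots> = expectation (\<lambda>\<omega>. \<Sum>p\<in>P. c p * indicator (F p) \<omega>)"
    using E F AE by (intro integral_cong_AE) auto
  also have "\<dots> = (\<Sum>p\<in>P. expectation (\<lambda>\<omega>. c p * indicator (F p) \<omega>))"
    using F by (intro Bochner_Integration.integral_sum integrable_mult_right integrable_real_indicator)
      (auto simp: less_top[symmetric])
  also have "\<dots> = (\<Sum>p\<in>P. c p * prob (F p))"
    using F by (intro sum.cong refl) (simp add: Int_absorb2)
  finally show ?thesis .
qed

lemma sum_indicator_unique:
  assumes "finite P" "p\<^sub>0 \<in> P" and "\<And>p. p \<in> P \<Longrightarrow> \<omega> \<in> F p \<longleftrightarrow> p = p\<^sub>0"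
  shows "(\<Sum>p\<in>P. c p * indicator (F p) \<omega>) = (c p\<^sub>0 :: real)"
proof -
  have "(\<Sum>p\<in>P. c p * indicator (F p) \<omega>) = (\<Sum>p\<in>P. if p = p\<^sub>0 then c p else 0)"
    using assms(3) by (intro sum.cong) (auto simp: indicator_def)
  also have "\<dots> = c p\<^sub>0" using assms(1,2) by simp
  finally show ?thesis .
qed

lemma (in prob_space) AE_no_ties:
  assumes "no_ties M n X" and "\<And>i. i \<in> {1..n} \<Longrightarrow> X i \<in> borel_measurable M"
  shows "AE \<omega> in M. inj_on (\<lambda>i. X i \<omega>) {1..n}"
proof -
  have "AE \<omega> in M. X i \<omega> \<noteq> X k \<omega>" if "i \<in> {1..n}" "k \<in> {1..n}" "i \<noteq> k" for i k
  proof (rule AE_I')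
    have "{\<omega> \<in> space M. X i \<omega> = X k \<omega>} \<in> events" using assms(2) that by measurable
    moreover have "prob {\<omega> \<in> space M. X i \<omega> = X k \<omega>} = 0"
      using assms(1) that unfolding no_ties_def by blast
    ultimately show "{\<omega> \<in> space M. X i \<omega> = X k \<omega>} \<in> null_sets M"
      by (simp add: null_sets_def emeasure_eq_measure)
  qed auto
  then have "AE \<omega> in M. \<forall>i\<in>{1..n}. \<forall>k\<in>{1..n}. i \<noteq> k \<longrightarrow> X i \<omega> \<noteq> X k \<omega>"
    by (intro eventually_ball_finite ballI) auto
  then show ?thesis by eventually_elim (auto simp: inj_on_def)
qed

lemma (in prob_space) I_BP_eq_sum_rank_events:
  assumes sc: "semicoherent n \<phi>"
    and X: "\<And>i. i \<in> {1..n} \<Longrightarrow> X i \<in> borel_measurable M"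
    and nonneg: "\<And>i. i \<in> {1..n} \<Longrightarrow> (AE \<omega> in M. 0 \<le> X i \<omega>)"
    and ties: "no_ties M n X" and j: "j \<in> {1..n}"
  shows "I_BP M n \<phi> X j = (\<Sum>A\<in>Pow ({1..n} - {j}).
     of_bool (\<phi> (insert j A) \<and> \<not> \<phi> A) * prob (rank_event M n X j A))"
proof -
  define E where "E = {\<omega> \<in> space M. sys_lifetime n \<phi> X \<omega> = X j \<omega>}"
  have E: "E \<in> events"
    using pred_lifetime_eq[OF sc X X[OF j]] unfolding E_def pred_def by simp
  have "AE \<omega> in M. \<forall>i\<in>{1..n}. 0 \<le> X i \<omega>"
    using nonneg by (intro eventually_ball_finite) auto
  moreover have "AE \<omega> in M. inj_on (\<lambda>i. X i \<omega>) {1..n}"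
    using ties X by (rule AE_no_ties)
  ultimately have "AE \<omega> in M. indicator E \<omega> = (\<Sum>A\<in>Pow ({1..n} - {j}).
      of_bool (\<phi> (insert j A) \<and> \<not> \<phi> A) * indicator (rank_event M n X j A) \<omega> :: real)"
  proof eventually_elim
    case (elim \<omega>)
    show ?case
    proof (cases "\<omega> \<in> space M")
      case True
      let ?A\<^sub>0 = "alive n (\<lambda>i. X i \<omega>) (X j \<omega>)"
      have "?A\<^sub>0 \<in> Pow ({1..n} - {j})" using alive_own_failure by blast
      moreover have "\<omega> \<in> rank_event M n X j A \<longleftrightarrow> A = ?A\<^sub>0" for A
        using True unfolding rank_event_def by auto
      ultimately have "(\<Sum>A\<in>Pow ({1..n} - {j}). of_bool (\<phi> (insert j A) \<and> \<not> \<phi> A) *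
          indicator (rank_event M n X j A) \<omega>) = (of_bool (\<phi> (insert j ?A\<^sub>0) \<and> \<not> \<phi> ?A\<^sub>0) :: real)"
        by (intro sum_indicator_unique) auto
      also have "\<phi> (insert j ?A\<^sub>0) \<and> \<not> \<phi> ?A\<^sub>0 \<longleftrightarrow> \<omega> \<in> E"
        using lifetime_eq_component_iff[OF sc _ _ j, of "\<lambda>i. X i \<omega>"] elim True
        unfolding E_def sys_lifetime_alive by simp
      finally show ?thesis by simp
    qed (simp add: E_def rank_event_def)
  qed
  then have "prob E = (\<Sum>A\<in>Pow ({1..n} - {j}).
      of_bool (\<phi> (insert j A) \<and> \<not> \<phi> A) * prob (rank_event M n X j A))"
    using E X j by (intro prob_eq_indicator_combination) (auto intro: sets_rank_event)
  then show ?thesis unfolding I_BP_def E_def .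
qed

lemma (in prob_space) rank_event_permute:
  assumes X: "\<And>i. i \<in> {1..n} \<Longrightarrow> X i \<in> borel_measurable M"
    and exch: "exchangeable M n X" and \<sigma>: "\<sigma> permutes {1..n}" and j: "j \<in> {1..n}"
  shows "prob (rank_event M n X (\<sigma> j) (\<sigma> ` A)) = prob (rank_event M n X j A)"
proof -
  let ?PM = "PiM {1..n} (\<lambda>_. borel) :: (nat \<Rightarrow> real) measure"
  define B where "B = {x \<in> space ?PM. alive n x (x j) = A}"
  have B: "B \<in> sets ?PM"
    using pred_alive[of n "\<lambda>i x. x i" ?PM "\<lambda>x. x j" "\<lambda>B. B = A"] j
    unfolding B_def pred_def by simp
  have law: "prob {\<omega> \<in> space M. alive n (\<lambda>i. Y i \<omega>) (Y j \<omega>) = A} =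
      measure (distr M ?PM (\<lambda>\<omega>. \<lambda>i\<in>{1..n}. Y i \<omega>)) B"
    if Y: "\<And>i. i \<in> {1..n} \<Longrightarrow> Y i \<in> borel_measurable M" for Y
  proof -
    have Ym: "(\<lambda>\<omega>. \<lambda>i\<in>{1..n}. Y i \<omega>) \<in> measurable M ?PM"
      using Y by (rule measurable_restrict)
    have "(\<lambda>\<omega>. \<lambda>i\<in>{1..n}. Y i \<omega>) -` B \<inter> space M =
        {\<omega> \<in> space M. alive n (\<lambda>i\<in>{1..n}. Y i \<omega>) (Y j \<omega>) = A}"
      using measurable_space[OF Ym] j unfolding B_def by auto
    also have "\<dots> = {\<omega> \<in> space M. alive n (\<lambda>i. Y i \<omega>) (Y j \<omega>) = A}"
      unfolding alive_restrict ..
    finally show ?thesis using measure_distr[OF Ym B] by simp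
  qed
  have "prob (rank_event M n X (\<sigma> j) (\<sigma> ` A)) =
      prob {\<omega> \<in> space M. alive n (\<lambda>i. X (\<sigma> i) \<omega>) (X (\<sigma> j) \<omega>) = A}"
    using alive_permute[OF \<sigma>, of "\<lambda>i. X i _"] unfolding rank_event_def by simp
  also have "\<dots> = measure (distr M ?PM (\<lambda>\<omega>. \<lambda>i\<in>{1..n}. X (\<sigma> i) \<omega>)) B"
    using X permutes_in_image[OF \<sigma>] by (intro law) auto
  also have "\<dots> = measure (distr M ?PM (\<lambda>\<omega>. \<lambda>i\<in>{1..n}. X i \<omega>)) B"
    using exch \<sigma> unfolding exchangeable_def by simp
  also have "\<dots> = prob (rank_event M n X j A)"
    unfolding rank_event_def using X by (intro law[symmetric]) auto
  finally show ?thesis .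
qed

definition rank_pairs :: "nat \<Rightarrow> nat \<Rightarrow> (nat \<times> nat set) set" where
  "rank_pairs n k = Sigma {1..n} (\<lambda>j. {A. A \<subseteq> {1..n} - {j} \<and> card A = k})"

lemma finite_rank_pairs: "finite (rank_pairs n k)"
  unfolding rank_pairs_def by (intro finite_SigmaI) auto

lemma card_rank_pairs: "card (rank_pairs n k) = n * (n - 1 choose k)"
proof -
  have "card (rank_pairs n k) = (\<Sum>j\<in>{1..n}. card {A. A \<subseteq> {1..n} - {j} \<and> card A = k})"
    unfolding rank_pairs_def by (rule card_SigmaI) auto
  also have "\<dots> = (\<Sum>j\<in>{1..n}. n - 1 choose k)"
    by (intro sum.cong refl) (subst n_subsets, auto)
  finally show ?thesis by simp
qed

(* For k < n, almost every outcome lies in exactly one rank event of order k: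
   the one of the unique component of rank k.  So their probabilities sum to 1. *)
lemma (in prob_space) rank_events_total:
  assumes X: "\<And>i. i \<in> {1..n} \<Longrightarrow> X i \<in> borel_measurable M"
    and ties: "no_ties M n X" and k: "k < n"
  shows "(\<Sum>p\<in>rank_pairs n k. prob (rank_event M n X (fst p) (snd p))) = 1"
proof -
  define F where "F p = rank_event M n X (fst p) (snd p)" for p
  have "AE \<omega> in M. inj_on (\<lambda>i. X i \<omega>) {1..n}"
    using ties X by (rule AE_no_ties)
  then have "AE \<omega> in M. indicator (space M) \<omega> =
      (\<Sum>p\<in>rank_pairs n k. 1 * indicator (F p) \<omega> :: real)"
  proof eventually_elim
    case (elim \<omega>)
    show ?case
    proof (cases "\<omega> \<in> space M")
      case True
      obtain j\<^sub>0 where j\<^sub>0: "j\<^sub>0 \<in> {1..n}" "card (alive n (\<lambda>i. X i \<omega>) (X j\<^sub>0 \<omega>)) = k"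
        "\<forall>j'\<in>{1..n}. card (alive n (\<lambda>i. X i \<omega>) (X j' \<omega>)) = k \<longrightarrow> j' = j\<^sub>0"
        by (rule component_of_rank[OF elim k])
      let ?p\<^sub>0 = "(j\<^sub>0, alive n (\<lambda>i. X i \<omega>) (X j\<^sub>0 \<omega>))"
      have "?p\<^sub>0 \<in> rank_pairs n k"
        using j\<^sub>0(1,2) alive_own_failure unfolding rank_pairs_def by blast
      moreover have "\<omega> \<in> F p \<longleftrightarrow> p = ?p\<^sub>0" if "p \<in> rank_pairs n k" for p
      proof (cases p)
        case (Pair j' A')
        have "\<omega> \<in> F p \<longleftrightarrow> alive n (\<lambda>i. X i \<omega>) (X j' \<omega>) = A'"
          using True unfolding F_def rank_event_def Pair by simp
        also have "\<dots> \<longleftrightarrow> p = ?p\<^sub>0"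
          using that j\<^sub>0(3) unfolding rank_pairs_def Pair by auto
        finally show ?thesis .
      qed
      ultimately have "(\<Sum>p\<in>rank_pairs n k. 1 * indicator (F p) \<omega>) = (1::real)"
        by (rule sum_indicator_unique[OF finite_rank_pairs, where c = "\<lambda>_. 1"])
      then show ?thesis using True by simp
    qed (auto simp: F_def rank_event_def)
  qed
  then have "prob (space M) = (\<Sum>p\<in>rank_pairs n k. 1 * prob (F p))"
    using X unfolding F_def
    by (intro prob_eq_indicator_combination) (auto intro: sets_rank_event simp: rank_pairs_def)
  then show ?thesis unfolding F_def by (simp add: prob_space)
qed

(* Step (3): every rank event R_j(A) has probability 1 / (n * C(n-1, |A|)), since
   all rank events of the same order are equally likely by exchangeability. *)
lemma (in prob_space) rank_event_prob:
  assumes X: "\<And>i. i \<in> {1..n} \<Longrightarrow> X i \<in> borel_measurable M"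
    and exch: "exchangeable M n X" and ties: "no_ties M n X"
    and j: "j \<in> {1..n}" and A: "A \<subseteq> {1..n} - {j}"
  shows "prob (rank_event M n X j A) = 1 / (real n * real (n - 1 choose card A))"
proof -
  have "card A \<le> card ({1..n} - {j})" using A by (intro card_mono) auto
  then have k: "card A < n" using j by auto
  have same: "prob (rank_event M n X (fst p) (snd p)) = prob (rank_event M n X j A)"
    if "p \<in> rank_pairs n (card A)" for p
  proof -
    have p: "fst p \<in> {1..n}" "snd p \<subseteq> {1..n} - {fst p}" "card A = card (snd p)"
      using that unfolding rank_pairs_def by auto
    obtain \<sigma> where \<sigma>: "\<sigma> permutes {1..n}" "\<sigma> j = fst p" "\<sigma> ` A = snd p"
      by (rule permutation_moving[OF finite_atLeastAtMost j p(1) A p(2,3)])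
    show ?thesis using rank_event_permute[OF X exch \<sigma>(1) j, of A] \<sigma> by simp
  qed
  have "1 = (\<Sum>p\<in>rank_pairs n (card A). prob (rank_event M n X (fst p) (snd p)))"
    using rank_events_total[OF X ties k] ..
  also have "\<dots> = real (n * (n - 1 choose card A)) * prob (rank_event M n X j A)"
    using same by (simp add: card_rank_pairs)
  finally show ?thesis using k by (simp add: field_simps)
qed

theorem corollary8:
  fixes M :: "'a measure" and n :: nat and \<phi> :: "nat set \<Rightarrow> bool"
    and X :: "nat \<Rightarrow> 'a \<Rightarrow> real" and j :: nat
  assumes "prob_space M"
    and "semicoherent n \<phi>"
    and "\<And>i. i \<in> {1..n} \<Longrightarrow> X i \<in> borel_measurable M"
    and "\<And>i. i \<in> {1..n} \<Longrightarrow> (AE \<omega> in M. 0 \<le> X i \<omega>)"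
    and "exchangeable M n X"
    and "no_ties M n X"
    and "j \<in> {1..n}"
  shows "I_BP M n \<phi> X j =
    (\<Sum>A\<in>Pow ({1..n} - {j}).
       (1 / (real n * real (n - 1 choose card A))) *
       (of_bool (\<phi> (A \<union> {j})) - of_bool (\<phi> A)))"
proof -
  interpret prob_space M by fact
  note sc = assms(2) and X = assms(3) and exch = assms(5) and ties = assms(6) and j = assms(7)
  have "I_BP M n \<phi> X j = (\<Sum>A\<in>Pow ({1..n} - {j}).
     of_bool (\<phi> (insert j A) \<and> \<not> \<phi> A) * prob (rank_event M n X j A))"
    by (rule I_BP_eq_sum_rank_events[OF sc X assms(4) ties j])
  also have "\<dots> = (\<Sum>A\<in>Pow ({1..n} - {j}).
     (1 / (real n * real (n - 1 choose card A))) * (of_bool (\<phi> (A \<union> {j})) - of_bool (\<phi> A)))"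
  proof (intro sum.cong refl)
    fix A assume "A \<in> Pow ({1..n} - {j})"
    then have "A \<subseteq> {1..n} - {j}" "A \<subseteq> {1..n}" by auto
    then show "of_bool (\<phi> (insert j A) \<and> \<not> \<phi> A) * prob (rank_event M n X j A) =
      1 / (real n * real (n - 1 choose card A)) * (of_bool (\<phi> (A \<union> {j})) - of_bool (\<phi> A))"
      by (simp only: rank_event_prob[OF X exch ties j] critical_indicator[OF sc j] mult.commute)
  qed
  finally show ?thesis .
qed

end
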